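(* Let $\mathcal{G}$ be a connected undirected network graph with a given set of monitors, let $\mathcal{B}$ be a biconnected component of $\mathcal{G}$, and let $\mathcal{T}$ be a triconnected component of $\mathcal{B}$ with vantages $\{\mu_i\}$. Then for each vantage $\mu_i$ there exists an external $\mu_i$-to-agent path $\mathcal{P}_i$ (where $\mathcal{P}_i$ is the degenerate single-node path $\mu_i$ if $\mu_i$ is an agent) such that $\mathcal{P}_i$ is internally vertex disjoint from all the other $\mu_j$-to-agent paths $\mathcal{P}_j$, $j\neq i$.
   Context: $\mathcal{G}$ is an undirected connected graph; some nodes are monitors. A biconnected component is a maximal 2-vertex-connected subgraph (or a bridge). For a biconnected component $\mathcal{B}$, a node $v\in V(\mathcal{B})$ is an agent of $\mathcal{B}$ if $v$ is a monitor, or $v$ is a cut-vertex of $\mathcal{G}$ through which $\mathcal{B}$ is connected to a monitor outside $\mathcal{B}$. The triconnected components of $\mathcal{B}$ are obtained by the standard (Hopcroft–Tarjan) decomposition: repeatedly splitting along 2-vertex cuts $\{a,b\}$, adding a virtual link $ab$ to each side, until every piece is 3-vertex-connected, a triangle, or a single link. For a triconnected component $\mathcal{T}$ of $\mathcal{B}$, a node of $\mathcal{T}$ is a vantage if it is an agent of $\mathcal{B}$, or it belongs to a 2-vertex cut $\{a,b\}\subseteq V(\mathcal{T})$ of $\mathcal{B}$ that separates $\mathcal{T}$ from some agent of $\mathcal{B}$. An external $\mu$-to-agent path is a path in $\mathcal{G}$ from the vantage $\mu$ to an agent of $\mathcal{B}$ none of whose vertices other than $\mu$ lies in $\mathcal{T}$.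 Two paths are internally vertex disjoint if no internal vertex of either path lies on the other path (they may share end-points). *)

theory Defs
  imports Main
begin

definition graph :: "'a set \<Rightarrow> 'a set set \<Rightarrow> bool" where
  "graph V E \<longleftrightarrow> finite V \<and> (\<forall>e\<in>E. \<exists>u v. e = {u, v} \<and> u \<noteq> v \<and> u \<in> V \<and> v \<in> V)"

definition is_path :: "'a set \<Rightarrow> 'a set set \<Rightarrow> 'a list \<Rightarrow> bool" where
  "is_path V E p \<longleftrightarrow> p \<noteq> [] \<and> distinct p \<and> set p \<subseteq> V \<and>
     (\<forall>i. Suc i < length p \<longrightarrow> {p ! i, p ! Suc i} \<in> E)"

definition induced :: "'a set set \<Rightarrow> 'a set \<Rightarrow> 'a set set" where
  "induced E S = {e \<in> E. e \<subseteq> S}"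

definition reachable :: "'a set \<Rightarrow> 'a set set \<Rightarrow> 'a \<Rightarrow> 'a \<Rightarrow> bool" where
  "reachable V E u v \<longleftrightarrow> (\<exists>p. is_path V E p \<and> hd p = u \<and> last p = v)"

definition connected_graph :: "'a set \<Rightarrow> 'a set set \<Rightarrow> bool" where
  "connected_graph V E \<longleftrightarrow> (\<forall>u\<in>V. \<forall>v\<in>V. reachable V E u v)"

definition two_connected :: "'a set \<Rightarrow> 'a set set \<Rightarrow> bool" where
  "two_connected V E \<longleftrightarrow> card V \<ge> 3 \<and> connected_graph V E \<and>
     (\<forall>x\<in>V. connected_graph (V - {x}) (induced E (V - {x})))"

definition three_connected :: "'a set \<Rightarrow> 'a set set \<Rightarrow> bool" where
  "three_connected V E \<longleftrightarrow> card V \<ge> 4 \<and>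
     (\<forall>X. X \<subseteq> V \<and> card X \<le> 2 \<longrightarrow> connected_graph (V - X) (induced E (V - X)))"

definition bridge :: "'a set \<Rightarrow> 'a set set \<Rightarrow> 'a set \<Rightarrow> bool" where
  "bridge V E e \<longleftrightarrow> e \<in> E \<and> \<not> connected_graph V (E - {e})"

definition cut_vertex :: "'a set \<Rightarrow> 'a set set \<Rightarrow> 'a \<Rightarrow> bool" where
  "cut_vertex V E v \<longleftrightarrow> v \<in> V \<and> \<not> connected_graph (V - {v}) (induced E (V - {v}))"

definition biconnected_component :: "'a set \<Rightarrow> 'a set set \<Rightarrow> 'a set \<Rightarrow> bool" where
  "biconnected_component V E S \<longleftrightarrow> S \<subseteq> V \<and>
     ((two_connected S (induced E S) \<and>
        (\<forall>S'. S \<subset> S' \<and> S' \<subseteq> V \<longrightarrow> \<not> two_connected S' (induced E S')))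
      \<or> (\<exists>u v. S = {u, v} \<and> bridge V E {u, v}))"

definition agent :: "'a set \<Rightarrow> 'a set set \<Rightarrow> 'a set \<Rightarrow> 'a set \<Rightarrow> 'a \<Rightarrow> bool" where
  "agent V E M S v \<longleftrightarrow> v \<in> S \<and>
     (v \<in> M \<or> (cut_vertex V E v \<and>
        (\<exists>m\<in>M. m \<notin> S \<and> (\<exists>p. is_path V E p \<and> hd p = v \<and> last p = m \<and> set (tl p) \<inter> S = {}))))"

text \<open>Pieces of the (Hopcroft--Tarjan style) splitting of the graph (VB,EB):
  split a piece (W,F) along a 2-vertex cut {a,b}, separating W - {a,b} into two nonempty
  parts C, D with no edge between them; the C-side is C \<union> {a,b} with the induced edges plus
  the virtual link ab (the D-side is obtained by the same rule with C, D swapped).\<close>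
inductive split_piece :: "'a set \<Rightarrow> 'a set set \<Rightarrow> 'a set \<Rightarrow> 'a set set \<Rightarrow> bool"
  for VB :: "'a set" and EB :: "'a set set" where
  base: "split_piece VB EB VB EB"
| step: "\<lbrakk> split_piece VB EB W F; a \<in> W; b \<in> W; a \<noteq> b; C \<subseteq> W - {a, b}; C \<noteq> {};
           W - {a, b} - C \<noteq> {};
           \<forall>e\<in>F. \<not> (e \<inter> C \<noteq> {} \<and> e \<inter> (W - {a, b} - C) \<noteq> {}) \<rbrakk>
         \<Longrightarrow> split_piece VB EB (C \<union> {a, b}) (insert {a, b} (induced F (C \<union> {a, b})))"

definition triconnected_component :: "'a set \<Rightarrow> 'a set set \<Rightarrow> 'a set \<Rightarrow> 'a set set \<Rightarrow> bool" where
  "triconnected_component VB EB W F \<longleftrightarrow> split_piece VB EB W F \<and>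
     (three_connected W F
      \<or> (\<exists>x y z. x \<noteq> y \<and> y \<noteq> z \<and> x \<noteq> z \<and> W = {x, y, z} \<and> F = {{x, y}, {y, z}, {x, z}})
      \<or> (\<exists>x y. x \<noteq> y \<and> W = {x, y} \<and> F = {{x, y}}))"

definition two_vertex_cut :: "'a set \<Rightarrow> 'a set set \<Rightarrow> 'a \<Rightarrow> 'a \<Rightarrow> bool" where
  "two_vertex_cut VB EB a b \<longleftrightarrow> a \<noteq> b \<and> a \<in> VB \<and> b \<in> VB \<and>
     \<not> connected_graph (VB - {a, b}) (induced EB (VB - {a, b}))"

definition vantage :: "'a set \<Rightarrow> 'a set set \<Rightarrow> 'a set \<Rightarrow> 'a set \<Rightarrow> 'a set \<Rightarrow> 'a \<Rightarrow> bool" where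
  "vantage V E M S W v \<longleftrightarrow> v \<in> W \<and>
     (agent V E M S v \<or>
      (\<exists>a b. v \<in> {a, b} \<and> a \<in> W \<and> b \<in> W \<and> two_vertex_cut S (induced E S) a b \<and>
         (\<exists>x. agent V E M S x \<and> x \<in> S - {a, b} \<and>
            (\<forall>y\<in>W - {a, b}. \<not> reachable (S - {a, b}) (induced E (S - {a, b})) y x))))"

definition external_path :: "'a set \<Rightarrow> 'a set set \<Rightarrow> 'a set \<Rightarrow> 'a set \<Rightarrow> 'a set \<Rightarrow> 'a \<Rightarrow> 'a list \<Rightarrow> bool" where
  "external_path V E M S W \<mu> p \<longleftrightarrow> is_path V E p \<and> hd p = \<mu> \<and> agent V E M S (last p) \<and>
     set (tl p) \<inter> W = {}"

definition internal :: "'a list \<Rightarrow> 'a set" where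
  "internal p = set (butlast (tl p))"

definition internally_disjoint :: "'a list \<Rightarrow> 'a list \<Rightarrow> bool" where
  "internally_disjoint p q \<longleftrightarrow> internal p \<inter> set q = {} \<and> internal q \<inter> set p = {}"

end

theory Submission
  imports Defs
begin

text \<open>A vantage \<mu> that is not an agent lies in a 2-cut {\<mu>, c} \<subseteq> W of B that separates some agent x
  from T. The component L of x in B - {\<mu>, c} avoids W, so it is a component of B - W, and by
  2-connectivity its boundary in B is exactly {\<mu>, c}. A fan lemma for 2-connected graphs joins \<mu>
  and c to x by two paths through L that meet only in x. Choosing such a pair of paths once per
  component L, the paths of vantages bounding different components run through disjoint parts
  of B - W, hence avoid each other and every vantage.\<close>

section \<open>Simple paths\<close>

definition simple_path :: "'a set set \<Rightarrow> 'a list \<Rightarrow> bool" where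
  "simple_path E p \<longleftrightarrow> p \<noteq> [] \<and> distinct p \<and> successively (\<lambda>u v. {u, v} \<in> E) p"

lemma is_path_iff_simple_path: "is_path V E p \<longleftrightarrow> simple_path E p \<and> set p \<subseteq> V"
  unfolding is_path_def simple_path_def successively_conv_nth by blast

lemma is_path_induced_iff: "is_path X (induced E X) p \<longleftrightarrow> simple_path E p \<and> set p \<subseteq> X"
proof -
  have "successively (\<lambda>u v. {u, v} \<in> induced E X) p \<longleftrightarrow> successively (\<lambda>u v. {u, v} \<in> E) p"
    if "set p \<subseteq> X" using that by (intro successively_cong) (auto simp: induced_def)
  then show ?thesis unfolding is_path_iff_simple_path simple_path_def by blast
qed

lemma reachable_induced_iff:
  "reachable X (induced E X) u v \<longleftrightarrow> (\<exists>p. simple_path E p \<and> set p \<subseteq> X \<and> hd p = u \<and> last p = v)"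
  unfolding reachable_def is_path_induced_iff by blast

lemma simple_path_singleton [simp]: "simple_path E [v]"
  by (simp add: simple_path_def)

lemma simple_path_not_Nil: "simple_path E p \<Longrightarrow> p \<noteq> []"
  by (simp add: simple_path_def)

lemma simple_path_distinct: "simple_path E p \<Longrightarrow> distinct p"
  by (simp add: simple_path_def)

lemma simple_path_Cons:
  "simple_path E (u # p) \<longleftrightarrow> u \<notin> set p \<and> (p = [] \<or> {u, hd p} \<in> E \<and> simple_path E p)"
  unfolding simple_path_def by (auto simp: successively_Cons)

lemma simple_path_append_iff:
  assumes "p \<noteq> []" "q \<noteq> []"
  shows "simple_path E (p @ q) \<longleftrightarrow>
    simple_path E p \<and> simple_path E q \<and> {last p, hd q} \<in> E \<and> set p \<inter> set q = {}"
  using assms unfolding simple_path_def by (auto simp: successively_append_iff)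

lemma simple_path_prefix: "simple_path E (p @ q) \<Longrightarrow> p \<noteq> [] \<Longrightarrow> simple_path E p"
  by (cases "q = []") (auto simp: simple_path_append_iff)

lemma simple_path_suffix: "simple_path E (p @ q) \<Longrightarrow> q \<noteq> [] \<Longrightarrow> simple_path E q"
  by (cases "p = []") (auto simp: simple_path_append_iff)

lemma simple_path_rev: "simple_path E p \<Longrightarrow> simple_path E (rev p)"
  unfolding simple_path_def by (simp add: insert_commute)

lemma simple_path_join:
  assumes "simple_path E p" "simple_path E q" "last p = hd q" "set p \<inter> set (tl q) = {}"
  shows "simple_path E (p @ tl q)"
proof (cases "tl q = []")
  case True
  then show ?thesis using assms(1) by simp
next
  case False
  then obtain v w q' where q: "q = v # w # q'"
    using simple_path_not_Nil[OF assms(2)] by (metis list.collapse)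
  then have "{v, w} \<in> E" "simple_path E (w # q')" using assms(2) by (auto simp: simple_path_Cons)
  then show ?thesis
    using assms q simple_path_not_Nil[OF assms(1)] by (simp add: simple_path_append_iff)
qed

lemma simple_path_replace_segment:
  assumes "simple_path E (A @ y # B @ t # C)" "simple_path E \<sigma>" "hd \<sigma> = y" "last \<sigma> = t"
    "set \<sigma> \<inter> set (A @ y # B @ t # C) \<subseteq> {y, t}"
  shows "simple_path E (A @ \<sigma> @ C)"
proof -
  have d: "distinct (A @ y # B @ t # C)" using assms(1) by (rule simple_path_distinct)
  obtain \<sigma>' where \<sigma>: "\<sigma> = y # \<sigma>'"
    using assms(2,3) simple_path_not_Nil by (metis list.collapse)
  have "simple_path E (A @ [y])"
    using assms(1) simple_path_prefix[of E "A @ [y]" "B @ t # C"] by simp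
  moreover have "simple_path E (t # C)"
    using assms(1) simple_path_suffix[of E "A @ y # B" "t # C"] by simp
  then have "simple_path E (\<sigma> @ C)"
    using simple_path_join[OF assms(2), of "t # C"] assms(4,5) d by auto
  moreover have "set (A @ [y]) \<inter> set (\<sigma>' @ C) = {}"
    using assms(2,5) d \<sigma> simple_path_distinct[of E \<sigma>] by auto
  ultimately have "simple_path E ((A @ [y]) @ tl (\<sigma> @ C))"
    using simple_path_join[of E "A @ [y]" "\<sigma> @ C"] \<sigma> by simp
  then show ?thesis using \<sigma> by simp
qed

lemma simple_path_snoc_shortcut:
  assumes "simple_path E p" "{last p, w} \<in> E"
  shows "\<exists>q. simple_path E q \<and> set q \<subseteq> insert w (set p) \<and> hd q = hd p \<and> last q = w"
proof (cases "w \<in> set p")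
  case True
  then obtain A B where p: "p = A @ w # B" by (meson split_list)
  then have "simple_path E (A @ [w])" using assms(1) simple_path_prefix[of E "A @ [w]" B] by simp
  moreover have "hd (A @ [w]) = hd p" using p by (cases A) auto
  ultimately show ?thesis using p by (intro exI[of _ "A @ [w]"]) auto
next
  case False
  then have "simple_path E (p @ [w])"
    using assms simple_path_not_Nil[OF assms(1)] by (simp add: simple_path_append_iff)
  then show ?thesis using simple_path_not_Nil[OF assms(1)] by (intro exI[of _ "p @ [w]"]) auto
qed

section \<open>Components and boundaries\<close>

definition boundary :: "'a set set \<Rightarrow> 'a set \<Rightarrow> 'a set \<Rightarrow> 'a set" where
  "boundary E S K = {v \<in> S - K. \<exists>u\<in>K. {u, v} \<in> E}"

lemma simple_path_meets_boundary:
  assumes "simple_path E p" "set p \<subseteq> S" "hd p \<in> K" "last p \<notin> K"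
  shows "\<exists>v\<in>set p. v \<in> boundary E S K"
proof -
  obtain A v B where p: "p = A @ v # B" "v \<notin> K" "\<forall>u\<in>set A. u \<in> K"
    using split_list_first_prop[of p "\<lambda>v. v \<notin> K"] assms(1,4) simple_path_not_Nil
    by (metis last_in_set)
  have "A \<noteq> []" using p assms(3) by (cases A) auto
  then have "{last A, v} \<in> E" "last A \<in> K"
    using assms(1) p by (auto simp: simple_path_append_iff)
  then show ?thesis using p assms(2) unfolding boundary_def by auto
qed

definition adjacency :: "'a set set \<Rightarrow> 'a set \<Rightarrow> ('a \<times> 'a) set" where
  "adjacency E X = {(u, v). u \<in> X \<and> v \<in> X \<and> {u, v} \<in> E}"

text \<open>For x \<notin> X this is the junk value {x}.\<close>
definition component_of :: "'a set set \<Rightarrow> 'a set \<Rightarrow> 'a \<Rightarrow> 'a set" where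
  "component_of E X x = {v. (x, v) \<in> (adjacency E X)\<^sup>*}"

lemma simple_path_rtrancl_adjacency:
  "simple_path E p \<Longrightarrow> set p \<subseteq> X \<Longrightarrow> (hd p, last p) \<in> (adjacency E X)\<^sup>*"
proof (induction p)
  case Nil
  then show ?case by (simp add: simple_path_def)
next
  case (Cons u p)
  show ?case
  proof (cases "p = []")
    case False
    with Cons have "(hd p, last p) \<in> (adjacency E X)\<^sup>*" "(u, hd p) \<in> adjacency E X"
      by (auto simp: simple_path_Cons adjacency_def)
    then show ?thesis using False by (simp add: converse_rtrancl_into_rtrancl)
  qed simp
qed

lemma rtrancl_adjacency_simple_path:
  "(u, v) \<in> (adjacency E X)\<^sup>* \<Longrightarrow> u \<in> X \<Longrightarrow>
    \<exists>p. simple_path E p \<and> set p \<subseteq> X \<and> hd p = u \<and> last p = v"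
proof (induction rule: rtrancl_induct)
  case base
  then show ?case by (intro exI[of _ "[u]"]) auto
next
  case (step w v)
  then obtain p where "simple_path E p" "set p \<subseteq> X" "hd p = u" "last p = w" by blast
  moreover have "{w, v} \<in> E" "v \<in> X" using step(2) by (auto simp: adjacency_def)
  ultimately show ?case using simple_path_snoc_shortcut[of E p v] by blast
qed

lemma self_in_component_of: "x \<in> component_of E X x"
  by (simp add: component_of_def)

lemma component_of_subset: "x \<in> X \<Longrightarrow> component_of E X x \<subseteq> X"
proof
  fix v assume "x \<in> X" "v \<in> component_of E X x"
  then have "(x, v) \<in> (adjacency E X)\<^sup>*" by (simp add: component_of_def)
  then show "v \<in> X" using \<open>x \<in> X\<close> by (induction rule: rtrancl_induct) (auto simp: adjacency_def)
qed

lemma component_of_closed: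
  "u \<in> component_of E X x \<Longrightarrow> u \<in> X \<Longrightarrow> v \<in> X \<Longrightarrow> {u, v} \<in> E \<Longrightarrow> v \<in> component_of E X x"
  unfolding component_of_def by (auto simp: adjacency_def intro: rtrancl_into_rtrancl)

lemma simple_path_subset_component_of:
  "simple_path E p \<Longrightarrow> set p \<subseteq> X \<Longrightarrow> hd p \<in> component_of E X x \<Longrightarrow> set p \<subseteq> component_of E X x"
proof (induction p)
  case (Cons u p)
  show ?case
  proof (cases "p = []")
    case False
    then have "{u, hd p} \<in> E" "simple_path E p" using Cons.prems(1) by (auto simp: simple_path_Cons)
    moreover have "hd p \<in> X" using Cons.prems(2) False by auto
    ultimately have "hd p \<in> component_of E X x"
      using Cons.prems component_of_closed[of u E X x "hd p"] by simp
    then show ?thesis using Cons \<open>simple_path E p\<close> by simp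
  qed (use Cons.prems in simp)
qed simp

lemma sym_adjacency: "sym (adjacency E X)"
  unfolding sym_def adjacency_def by (auto simp: insert_commute)

lemma rtrancl_adjacency_sym: "(u, v) \<in> (adjacency E X)\<^sup>* \<Longrightarrow> (v, u) \<in> (adjacency E X)\<^sup>*"
  using symD[OF sym_rtrancl[OF sym_adjacency[of E X]]] .

lemma component_of_path:
  assumes "x \<in> X" "u \<in> component_of E X x" "v \<in> component_of E X x"
  shows "\<exists>p. simple_path E p \<and> set p \<subseteq> component_of E X x \<and> hd p = u \<and> last p = v"
proof -
  have xu: "(x, u) \<in> (adjacency E X)\<^sup>*" and xv: "(x, v) \<in> (adjacency E X)\<^sup>*"
    using assms(2,3) by (simp_all add: component_of_def)
  have uv: "(u, v) \<in> (adjacency E X)\<^sup>*" using rtrancl_trans[OF rtrancl_adjacency_sym[OF xu] xv] .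
  have "u \<in> X" using component_of_subset[OF assms(1)] assms(2) by blast
  then obtain p where p: "simple_path E p" "set p \<subseteq> X" "hd p = u" "last p = v"
    using rtrancl_adjacency_simple_path[OF uv] by blast
  then have "set p \<subseteq> component_of E X x"
    using assms(2) simple_path_subset_component_of[of E p X x] by simp
  then show ?thesis using p by blast
qed

lemma component_of_eq_if_mem:
  assumes "z \<in> component_of E X x" "z \<in> component_of E X y"
  shows "component_of E X x = component_of E X y"
proof -
  have xz: "(x, z) \<in> (adjacency E X)\<^sup>*" and yz: "(y, z) \<in> (adjacency E X)\<^sup>*"
    using assms by (simp_all add: component_of_def)
  have xy: "(x, y) \<in> (adjacency E X)\<^sup>*" using rtrancl_trans[OF xz rtrancl_adjacency_sym[OF yz]] .
  have yx: "(y, x) \<in> (adjacency E X)\<^sup>*" using rtrancl_trans[OF yz rtrancl_adjacency_sym[OF xz]] .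
  show ?thesis
    unfolding component_of_def using rtrancl_trans[OF xy] rtrancl_trans[OF yx] by blast
qed

lemma component_of_restrict:
  assumes "x \<in> Y" "Y \<subseteq> X" "component_of E X x \<subseteq> Y"
  shows "component_of E Y x = component_of E X x"
proof
  have "adjacency E Y \<subseteq> adjacency E X" using assms(2) unfolding adjacency_def by auto
  then show "component_of E Y x \<subseteq> component_of E X x"
    unfolding component_of_def using rtrancl_mono by blast
next
  show "component_of E X x \<subseteq> component_of E Y x"
  proof
    fix v assume v: "v \<in> component_of E X x"
    have "x \<in> X" using assms(1,2) by blast
    then obtain p where p: "simple_path E p" "set p \<subseteq> component_of E X x" "hd p = x" "last p = v"
      using component_of_path[OF _ self_in_component_of v] by blast
    then have "(x, v) \<in> (adjacency E Y)\<^sup>*"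
      using simple_path_rtrancl_adjacency[OF p(1), of Y] assms(3) by auto
    then show "v \<in> component_of E Y x" by (simp add: component_of_def)
  qed
qed

lemma boundary_component_of:
  assumes "x \<in> X"
  shows "boundary E S (component_of E X x) \<subseteq> S - X"
proof
  fix v assume "v \<in> boundary E S (component_of E X x)"
  then obtain u where uv: "v \<in> S" "v \<notin> component_of E X x" "u \<in> component_of E X x" "{u, v} \<in> E"
    unfolding boundary_def by blast
  moreover have "u \<in> X" using component_of_subset[OF assms] uv(3) by blast
  ultimately show "v \<in> S - X" using component_of_closed[of u E X x v] by blast
qed

lemma two_connected_path_avoiding:
  assumes "two_connected S (induced E S)" "y \<in> S" "u \<in> S - {y}" "v \<in> S - {y}"
  shows "\<exists>p. simple_path E p \<and> set p \<subseteq> S - {y} \<and> hd p = u \<and> last p = v"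
proof -
  have "induced (induced E S) (S - {y}) = induced E (S - {y})" by (auto simp: induced_def)
  then have "connected_graph (S - {y}) (induced E (S - {y}))"
    using assms(1,2) unfolding two_connected_def by metis
  then show ?thesis using assms(3,4) unfolding connected_graph_def reachable_induced_iff by blast
qed

lemma two_connected_boundary_avoiding:
  assumes "two_connected S (induced E S)" "K \<subseteq> S" "x \<in> K" "y \<in> S - K" "t \<in> S - K" "y \<noteq> t"
  shows "\<exists>z\<in>boundary E S K. z \<noteq> y"
proof -
  have "x \<in> S - {y}" "t \<in> S - {y}" using assms(2-6) by auto
  then obtain p where "simple_path E p" "set p \<subseteq> S - {y}" "hd p = x" "last p = t"
    using two_connected_path_avoiding[OF assms(1)] assms(4) by blast
  then show ?thesis using simple_path_meets_boundary[of E p S K] assms(3,5) by blast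
qed

lemma two_connected_boundary_two_points:
  assumes "two_connected S (induced E S)" "K \<subseteq> S" "x \<in> K" "a \<in> S - K" "b \<in> S - K" "a \<noteq> b"
  shows "\<exists>y z. y \<in> boundary E S K \<and> z \<in> boundary E S K \<and> y \<noteq> z"
proof -
  obtain y where y: "y \<in> boundary E S K" "y \<noteq> a"
    using two_connected_boundary_avoiding[OF assms] by blast
  then have "y \<in> S - K" by (simp add: boundary_def)
  moreover obtain t where "t \<in> S - K" "t \<noteq> y" using assms(4,5) y(2) by blast
  ultimately obtain z where "z \<in> boundary E S K" "z \<noteq> y"
    using two_connected_boundary_avoiding[OF assms(1-3)] by blast
  then show ?thesis using y by blast
qed

section \<open>Fans in a 2-connected graph\<close>

locale two_separation =
  fixes E :: "'a set set" and S :: "'a set" and a b x :: 'a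
  assumes two_connected: "two_connected S (induced E S)"
    and a_in_S: "a \<in> S" and b_in_S: "b \<in> S" and a_neq_b: "a \<noteq> b" and x_in: "x \<in> S - {a, b}"
begin

definition side :: "'a set" where
  "side = component_of E (S - {a, b}) x"

lemma x_in_side: "x \<in> side"
  unfolding side_def by (rule self_in_component_of)

lemma side_subset: "side \<subseteq> S - {a, b}"
  unfolding side_def using x_in by (rule component_of_subset)

lemma side_closed: "u \<in> side \<Longrightarrow> v \<in> S - {a, b} \<Longrightarrow> {u, v} \<in> E \<Longrightarrow> v \<in> side"
  unfolding side_def using side_subset component_of_closed[of u E "S - {a, b}" x v]
  by (auto simp: side_def)

lemma boundary_side: "boundary E S side = {a, b}"
proof -
  have "boundary E S side \<subseteq> {a, b}"
    using boundary_component_of[OF x_in, of E S] a_in_S b_in_S unfolding side_def by auto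
  moreover obtain y z where "y \<in> boundary E S side" "z \<in> boundary E S side" "y \<noteq> z"
    using two_connected_boundary_two_points[OF two_connected _ x_in_side, of a b]
      side_subset a_in_S b_in_S a_neq_b by blast
  ultimately show ?thesis by blast
qed

definition crossing_path :: "'a list \<Rightarrow> bool" where
  "crossing_path \<pi> \<longleftrightarrow> simple_path E \<pi> \<and> hd \<pi> = a \<and> last \<pi> = b \<and> set \<pi> \<subseteq> side \<union> {a, b}"

lemma crossing_path_ends: "crossing_path \<pi> \<Longrightarrow> a \<in> set \<pi> \<and> b \<in> set \<pi>"
  unfolding crossing_path_def using simple_path_not_Nil by (metis hd_in_set last_in_set)

lemma crossing_path_exists: "\<exists>\<pi>. crossing_path \<pi>"
proof -
  obtain u v where u: "u \<in> side" "{u, a} \<in> E" and v: "v \<in> side" "{v, b} \<in> E"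
    using boundary_side unfolding boundary_def by blast
  obtain p where p: "simple_path E p" "set p \<subseteq> side" "hd p = u" "last p = v"
    using component_of_path[OF x_in u(1)[unfolded side_def] v(1)[unfolded side_def]]
    unfolding side_def by blast
  have "a \<notin> set p" "b \<notin> set p" using p(2) side_subset by auto
  then have "simple_path E (a # p @ [b])"
    using p u v simple_path_not_Nil[OF p(1)] a_neq_b
    by (auto simp: simple_path_Cons simple_path_append_iff insert_commute)
  then show ?thesis using p(2) unfolding crossing_path_def by (intro exI[of _ "a # p @ [b]"]) auto
qed

lemma crossing_path_replace_segment:
  assumes "crossing_path (A @ y # B @ t # C)" "simple_path E \<sigma>" "hd \<sigma> = y" "last \<sigma> = t"
    "set \<sigma> \<subseteq> side \<union> {a, b}" "set \<sigma> \<inter> set (A @ y # B @ t # C) \<subseteq> {y, t}"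
  shows "crossing_path (A @ \<sigma> @ C)"
proof -
  have "\<sigma> \<noteq> []" using assms(2) by (rule simple_path_not_Nil)
  then have "hd (A @ \<sigma> @ C) = hd (A @ y # B @ t # C)" "last (A @ \<sigma> @ C) = last (A @ y # B @ t # C)"
    using assms(3,4) by (cases A; cases C rule: rev_cases; simp)+
  then show ?thesis
    using assms simple_path_replace_segment[of E A y B t C \<sigma>] unfolding crossing_path_def by auto
qed

lemma crossing_path_reroute:
  assumes "crossing_path \<pi>" "y \<in> set \<pi>" "t \<in> set \<pi>" "y \<noteq> t"
    "simple_path E \<sigma>" "hd \<sigma> = y" "last \<sigma> = t" "set \<sigma> \<subseteq> side \<union> {a, b}" "set \<sigma> \<inter> set \<pi> \<subseteq> {y, t}"
  shows "\<exists>\<pi>'. crossing_path \<pi>' \<and> set \<sigma> \<subseteq> set \<pi>'"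
proof -
  obtain A B where \<pi>: "\<pi> = A @ y # B" using assms(2) by (meson split_list)
  then consider "t \<in> set B" | "t \<in> set A" using assms(3,4) by auto
  then show ?thesis
  proof cases
    case 1
    then obtain B1 B2 where "\<pi> = A @ y # B1 @ t # B2" using \<pi> by (metis split_list)
    then show ?thesis using crossing_path_replace_segment[of A y B1 t B2 \<sigma>] assms by auto
  next
    case 2
    then obtain A1 A2 where \<pi>': "\<pi> = A1 @ t # A2 @ y # B" using \<pi> by (metis split_list append.assoc append_Cons)
    have "simple_path E (rev \<sigma>)" "hd (rev \<sigma>) = t" "last (rev \<sigma>) = y"
      using assms(5-7) simple_path_rev simple_path_not_Nil by (auto simp: hd_rev last_rev)
    then have "crossing_path (A1 @ rev \<sigma> @ B)"
      using crossing_path_replace_segment[of A1 t A2 y B "rev \<sigma>"] assms \<pi>' by auto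
    then show ?thesis by (intro exI[of _ "A1 @ rev \<sigma> @ B"]) auto
  qed
qed

lemma crossing_path_branch:
  assumes "crossing_path \<pi>" "z \<in> set \<pi>" "y \<noteq> z"
  shows "\<exists>\<tau>. simple_path E \<tau> \<and> hd \<tau> = z \<and> last \<tau> \<in> {a, b} \<and> set \<tau> \<subseteq> set \<pi> \<and> y \<notin> set \<tau>"
proof -
  obtain A B where \<pi>: "\<pi> = A @ z # B" using assms(2) by (meson split_list)
  have P: "simple_path E \<pi>" "hd \<pi> = a" "last \<pi> = b" using assms(1) by (auto simp: crossing_path_def)
  have "simple_path E (A @ [z])" using simple_path_prefix[of E "A @ [z]" B] P(1) \<pi> by simp
  then have t1: "simple_path E (z # rev A)" using simple_path_rev by fastforce
  have l1: "last (z # rev A) = a" using P(2) \<pi> by (cases A) auto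
  have t2: "simple_path E (z # B)" using simple_path_suffix[of E A "z # B"] P(1) \<pi> by simp
  have l2: "last (z # B) = b" using P(3) \<pi> by (cases B rule: rev_cases) auto
  consider "y \<notin> set (z # rev A)" | "y \<notin> set (z # B)"
    using simple_path_distinct[OF P(1)] \<pi> assms(3) by auto
  then show ?thesis
  proof cases
    case 1
    then show ?thesis using t1 l1 \<pi> by (intro exI[of _ "z # rev A"]) auto
  next
    case 2
    then show ?thesis using t2 l2 \<pi> by (intro exI[of _ "z # B"]) auto
  qed
qed

lemma crossing_path_reroute_between:
  assumes "crossing_path \<pi>\<^sub>1" "y \<in> set \<pi>\<^sub>1" "crossing_path \<pi>\<^sub>2" "z \<in> set \<pi>\<^sub>2" "y \<noteq> z"
    "simple_path E \<sigma>" "hd \<sigma> = y" "last \<sigma> = z" "set \<sigma> \<subseteq> side \<union> {a, b}"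
    "set \<sigma> \<inter> (set \<pi>\<^sub>1 \<union> set \<pi>\<^sub>2) \<subseteq> {y, z}"
  shows "\<exists>\<pi>'. crossing_path \<pi>' \<and> set \<sigma> \<subseteq> set \<pi>'"
proof (cases "z \<in> set \<pi>\<^sub>1")
  case True
  then show ?thesis using crossing_path_reroute[of \<pi>\<^sub>1 y z \<sigma>] assms by auto
next
  case False
  \<comment> \<open>continue \<sigma> along the second path, away from y, up to its first vertex t on the first\<close>
  obtain \<tau> where \<tau>: "simple_path E \<tau>" "hd \<tau> = z" "last \<tau> \<in> {a, b}" "set \<tau> \<subseteq> set \<pi>\<^sub>2" "y \<notin> set \<tau>"
    using crossing_path_branch[OF assms(3,4,5)] by blast
  have "last \<tau> \<in> set \<pi>\<^sub>1" using \<tau>(3) crossing_path_ends[OF assms(1)] by auto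
  then obtain g t h where gth: "\<tau> = g @ t # h" "t \<in> set \<pi>\<^sub>1" "\<forall>v\<in>set g. v \<notin> set \<pi>\<^sub>1"
    using split_list_first_prop[of \<tau> "\<lambda>v. v \<in> set \<pi>\<^sub>1"] simple_path_not_Nil[OF \<tau>(1)]
    by (metis last_in_set)
  have "g \<noteq> []" using gth \<tau>(2) False by auto
  then have g: "hd (g @ [t]) = z" "set (tl (g @ [t])) \<subseteq> set \<tau> - {z}"
      "set (tl (g @ [t])) \<subseteq> insert t (set g)"
    using gth \<tau>(2) simple_path_distinct[OF \<tau>(1)] by (cases g; auto)+
  define \<sigma>' where "\<sigma>' = \<sigma> @ tl (g @ [t])"
  have "simple_path E (g @ [t])" using simple_path_prefix[of E "g @ [t]" h] \<tau>(1) gth(1) by simp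
  moreover have "set \<sigma> \<inter> set (tl (g @ [t])) = {}" using g(2) \<tau>(4,5) assms(10) by blast
  ultimately have "simple_path E \<sigma>'"
    unfolding \<sigma>'_def using simple_path_join[OF assms(6)] assms(8) g(1) by simp
  moreover have "hd \<sigma>' = y" "last \<sigma>' = t"
    unfolding \<sigma>'_def using assms(7) simple_path_not_Nil[OF assms(6)] \<open>g \<noteq> []\<close> by auto
  moreover have "set \<sigma>' \<subseteq> side \<union> {a, b}"
    unfolding \<sigma>'_def using g(2) \<tau>(4) assms(3,9) unfolding crossing_path_def by auto
  moreover have "set \<sigma>' \<inter> set \<pi>\<^sub>1 \<subseteq> {y, t}"
    unfolding \<sigma>'_def using g(3) gth assms(10) False by auto
  moreover have "t \<noteq> y" using gth(1) \<tau>(5) by auto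
  ultimately obtain \<pi>' where "crossing_path \<pi>'" "set \<sigma>' \<subseteq> set \<pi>'"
    using crossing_path_reroute[OF assms(1,2) gth(2)] by metis
  then show ?thesis unfolding \<sigma>'_def by auto
qed

definition covered :: "'a set" where
  "covered = {v. \<exists>\<pi>. crossing_path \<pi> \<and> v \<in> set \<pi>}"

lemma covered_subset: "covered \<subseteq> side \<union> {a, b}"
  unfolding covered_def crossing_path_def by blast

lemma ends_covered: "a \<in> covered" "b \<in> covered"
  using crossing_path_exists crossing_path_ends unfolding covered_def by blast+

lemma boundary_uncovered_component:
  assumes "v \<in> side - covered"
  shows "boundary E S (component_of E (side - covered) v) \<subseteq> covered"
proof
  let ?K = "component_of E (side - covered) v"
  fix w assume "w \<in> boundary E S ?K"
  then obtain u where w: "w \<in> S" "w \<notin> ?K" and u: "u \<in> ?K" "{u, w} \<in> E"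
    unfolding boundary_def by blast
  have "u \<in> side - covered" using u(1) component_of_subset[OF assms] by blast
  show "w \<in> covered"
  proof (rule ccontr)
    assume "w \<notin> covered"
    then have "w \<in> S - {a, b}" using w(1) ends_covered by auto
    then have "w \<in> side - covered"
      using side_closed[OF _ _ u(2)] \<open>u \<in> side - covered\<close> \<open>w \<notin> covered\<close> by blast
    then show False using component_of_closed[OF u(1) \<open>u \<in> side - covered\<close> _ u(2)] w(2) by blast
  qed
qed

text \<open>Otherwise a component K of the uncovered part of the side has two covered boundary vertices
  (by 2-connectivity), and a path through K joining them reroutes into a crossing path.\<close>
lemma side_subset_covered: "side \<subseteq> covered"
proof (rule ccontr)
  assume "\<not> side \<subseteq> covered"
  then obtain v where v: "v \<in> side - covered" by blast
  define K where "K = component_of E (side - covered) v"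
  have K: "K \<subseteq> side - covered" "v \<in> K"
    unfolding K_def using component_of_subset[OF v] self_in_component_of by auto
  have "a \<in> S - K" "b \<in> S - K" using K(1) ends_covered a_in_S b_in_S by auto
  then obtain y z where yz: "y \<in> boundary E S K" "z \<in> boundary E S K" "y \<noteq> z"
    using two_connected_boundary_two_points[OF two_connected _ K(2)] K(1) side_subset a_neq_b
    by blast
  then have "y \<in> covered" "z \<in> covered"
    using boundary_uncovered_component[OF v] unfolding K_def by auto
  then obtain \<pi>\<^sub>1 \<pi>\<^sub>2 where \<pi>: "crossing_path \<pi>\<^sub>1" "y \<in> set \<pi>\<^sub>1" "crossing_path \<pi>\<^sub>2" "z \<in> set \<pi>\<^sub>2"
    unfolding covered_def by blast
  obtain k\<^sub>1 k\<^sub>2 where k: "k\<^sub>1 \<in> K" "{k\<^sub>1, y} \<in> E" "k\<^sub>2 \<in> K" "{k\<^sub>2, z} \<in> E"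
    using yz(1,2) unfolding boundary_def by blast
  obtain p where p: "simple_path E p" "set p \<subseteq> K" "hd p = k\<^sub>1" "last p = k\<^sub>2"
    using component_of_path[OF v k(1,3)[unfolded K_def]] unfolding K_def by blast
  have "y \<notin> K" "z \<notin> K" using yz(1,2) unfolding boundary_def by auto
  then have "simple_path E (y # p @ [z])"
    using p k yz(3) simple_path_not_Nil[OF p(1)]
    by (auto simp: simple_path_Cons simple_path_append_iff insert_commute)
  moreover have "set (y # p @ [z]) \<subseteq> side \<union> {a, b}"
    using p(2) K(1) \<open>y \<in> covered\<close> \<open>z \<in> covered\<close> covered_subset by auto
  moreover have "set (y # p @ [z]) \<inter> (set \<pi>\<^sub>1 \<union> set \<pi>\<^sub>2) \<subseteq> {y, z}"
    using p(2) K(1) \<pi>(1,3) unfolding covered_def by auto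
  ultimately obtain \<pi>' where "crossing_path \<pi>'" "set (y # p @ [z]) \<subseteq> set \<pi>'"
    using crossing_path_reroute_between[OF \<pi> yz(3), of "y # p @ [z]"] by auto
  then have "k\<^sub>1 \<in> covered"
    using p(3) simple_path_not_Nil[OF p(1)] unfolding covered_def by (auto intro: hd_in_set)
  then show False using k(1) K(1) by auto
qed

lemma fan:
  assumes "v \<in> side"
  shows "\<exists>p q. simple_path E p \<and> simple_path E q \<and> hd p = a \<and> hd q = b \<and> last p = v \<and>
    last q = v \<and> set (tl p) \<subseteq> side \<and> set (tl q) \<subseteq> side \<and> set p \<inter> set q = {v}"
proof -
  obtain \<pi> where \<pi>: "crossing_path \<pi>" "v \<in> set \<pi>"
    using assms side_subset_covered unfolding covered_def by blast
  then obtain A B where AB: "\<pi> = A @ v # B" by (meson split_list)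
  have P: "simple_path E \<pi>" "hd \<pi> = a" "last \<pi> = b" "set \<pi> \<subseteq> side \<union> {a, b}"
    using \<pi>(1) by (auto simp: crossing_path_def)
  have d: "distinct \<pi>" using P(1) by (rule simple_path_distinct)
  have "v \<noteq> a" "v \<noteq> b" using assms side_subset by auto
  have A: "A \<noteq> []" "hd A = a" using P(2) AB \<open>v \<noteq> a\<close> by (cases A; simp)+
  have B: "B \<noteq> []" "last B = b" using P(3) AB \<open>v \<noteq> b\<close> by (cases B; simp)+
  let ?p = "A @ [v]" and ?q = "rev (v # B)"
  have "simple_path E ?p" using simple_path_prefix[of E ?p B] P(1) AB by simp
  moreover have "simple_path E ?q" using simple_path_rev simple_path_suffix[of E A "v # B"] P(1) AB by blast
  moreover have "set (tl ?p) \<subseteq> side" "set (tl ?q) \<subseteq> side"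
    using A B d AB P(4) \<open>v \<noteq> a\<close> \<open>v \<noteq> b\<close> assms by (cases A; cases B rule: rev_cases; auto)+
  moreover have "set ?p \<inter> set ?q = {v}" using d AB by auto
  ultimately show ?thesis using A B by (intro exI[of _ ?p] exI[of _ ?q]) (simp add: hd_rev)
qed

end

section \<open>Paths from the vantages to agents\<close>

lemma internal_subset: "distinct p \<Longrightarrow> internal p \<subseteq> set p - {hd p, last p}"
  unfolding internal_def
  by (cases p rule: rev_cases; cases "butlast p"; auto dest: in_set_butlastD)

lemma internally_disjoint_if_meet_at_last:
  assumes "simple_path E p" "simple_path E q" "last p = last q" "set p \<inter> set q = {last p}"
  shows "internally_disjoint p q"
  using internal_subset[OF simple_path_distinct[OF assms(1)]]
    internal_subset[OF simple_path_distinct[OF assms(2)]] assms(3,4)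
  unfolding internally_disjoint_def by auto

lemma biconnected_component_two_connected:
  assumes "biconnected_component V E S" "two_vertex_cut S (induced E S) a b"
  shows "two_connected S (induced E S)"
proof -
  have "S - {a, b} \<noteq> {}"
  proof
    assume "S - {a, b} = {}"
    then have "connected_graph (S - {a, b}) (induced (induced E S) (S - {a, b}))"
      unfolding connected_graph_def by blast
    then show False using assms(2) by (simp add: two_vertex_cut_def)
  qed
  moreover have "a \<in> S" "b \<in> S" "a \<noteq> b" using assms(2) by (auto simp: two_vertex_cut_def)
  ultimately have "\<nexists>u v. S = {u, v}" by auto
  then show ?thesis using assms(1) by (auto simp: biconnected_component_def)
qed

lemma vantage_not_agent_cut:
  assumes "vantage V E M S W \<mu>" "\<not> agent V E M S \<mu>"
  obtains c x where "\<mu> \<in> W" "c \<in> W" "two_vertex_cut S (induced E S) \<mu> c" "agent V E M S x"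
    "x \<in> S - {\<mu>, c}" "\<forall>y\<in>W - {\<mu>, c}. \<not> reachable (S - {\<mu>, c}) (induced E (S - {\<mu>, c})) y x"
proof -
  obtain a b x where ab: "\<mu> \<in> {a, b}" "a \<in> W" "b \<in> W" "two_vertex_cut S (induced E S) a b"
    "agent V E M S x" "x \<in> S - {a, b}"
    "\<forall>y\<in>W - {a, b}. \<not> reachable (S - {a, b}) (induced E (S - {a, b})) y x"
    using assms unfolding vantage_def by blast
  have "two_vertex_cut S (induced E S) b a" using ab(4) by (auto simp: two_vertex_cut_def insert_commute)
  then show ?thesis using that ab by (cases "\<mu> = a") (auto simp: insert_commute)
qed

definition agent_fan :: "'a set \<Rightarrow> 'a set set \<Rightarrow> 'a set \<Rightarrow> 'a set \<Rightarrow> 'a set \<Rightarrow> ('a \<Rightarrow> 'a list) \<Rightarrow> bool"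
  where "agent_fan V E M S L f \<longleftrightarrow> (\<forall>u\<in>boundary E S L.
    simple_path E (f u) \<and> hd (f u) = u \<and> agent V E M S (last (f u)) \<and> set (tl (f u)) \<subseteq> L \<and>
    (\<forall>v\<in>boundary E S L. v \<noteq> u \<longrightarrow> internally_disjoint (f u) (f v)))"

definition agent_lobe :: "'a set \<Rightarrow> 'a set set \<Rightarrow> 'a set \<Rightarrow> 'a set \<Rightarrow> 'a set \<Rightarrow> 'a set \<Rightarrow> bool"
  where "agent_lobe V E M S W L \<longleftrightarrow>
    (\<exists>x\<in>S - W. L = component_of E (S - W) x) \<and> (\<exists>f. agent_fan V E M S L f)"

lemma agent_lobe_subset:
  assumes "agent_lobe V E M S W L"
  shows "L \<subseteq> S - W"
proof -
  obtain x where "x \<in> S - W" "L = component_of E (S - W) x"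
    using assms unfolding agent_lobe_def by blast
  then show ?thesis using component_of_subset[of x "S - W" E] by simp
qed

lemma agent_lobes_disjoint:
  assumes "agent_lobe V E M S W L" "agent_lobe V E M S W L'" "L \<noteq> L'"
  shows "L \<inter> L' = {}"
proof -
  obtain x x' where "L = component_of E (S - W) x" "L' = component_of E (S - W) x'"
    using assms(1,2) unfolding agent_lobe_def by blast
  then show ?thesis using component_of_eq_if_mem[of _ E "S - W" x x'] assms(3) by blast
qed

lemma vantage_in_boundary_of_agent_lobe:
  assumes "biconnected_component V E S" "vantage V E M S W \<mu>" "\<not> agent V E M S \<mu>"
  shows "\<exists>L. agent_lobe V E M S W L \<and> \<mu> \<in> boundary E S L"
proof -
  obtain c x where c: "\<mu> \<in> W" "c \<in> W" "two_vertex_cut S (induced E S) \<mu> c"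
    and x: "agent V E M S x" "x \<in> S - {\<mu>, c}"
    and sep: "\<forall>y\<in>W - {\<mu>, c}. \<not> reachable (S - {\<mu>, c}) (induced E (S - {\<mu>, c})) y x"
    by (rule vantage_not_agent_cut[OF assms(2,3)])
  interpret two_separation E S \<mu> c x
    using biconnected_component_two_connected[OF assms(1) c(3)] c(3) x(2)
    by unfold_locales (auto simp: two_vertex_cut_def)
  have "side \<inter> W = {}"
  proof (rule ccontr)
    assume "side \<inter> W \<noteq> {}"
    then obtain y where y: "y \<in> side" "y \<in> W" by blast
    then obtain p where "simple_path E p" "set p \<subseteq> side" "hd p = y" "last p = x"
      using component_of_path[OF x(2), of y E x] x_in_side unfolding side_def by blast
    then have "reachable (S - {\<mu>, c}) (induced E (S - {\<mu>, c})) y x"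
      unfolding reachable_induced_iff using side_subset by blast
    then show False using sep y side_subset by blast
  qed
  then have "side = component_of E (S - W) x"
    using component_of_restrict[of x "S - W" "S - {\<mu>, c}" E] x_in_side side_subset c(1,2)
    unfolding side_def by blast
  moreover obtain p q where pq: "simple_path E p" "simple_path E q" "hd p = \<mu>" "hd q = c"
    "last p = x" "last q = x" "set (tl p) \<subseteq> side" "set (tl q) \<subseteq> side" "set p \<inter> set q = {x}"
    using fan[OF x_in_side] by blast
  have "internally_disjoint p q" "internally_disjoint q p"
    using internally_disjoint_if_meet_at_last[OF pq(1,2)] pq(5,6,9)
    by (auto simp: internally_disjoint_def)
  then have "agent_fan V E M S side (\<lambda>u. if u = \<mu> then p else q)"
    unfolding agent_fan_def boundary_side using pq x(1) a_neq_b by auto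
  moreover have "x \<in> S - W" using x(2) x_in_side \<open>side \<inter> W = {}\<close> by blast
  ultimately have "agent_lobe V E M S W side" unfolding agent_lobe_def by blast
  then show ?thesis using boundary_side by auto
qed

definition lobe_of :: "'a set \<Rightarrow> 'a set set \<Rightarrow> 'a set \<Rightarrow> 'a set \<Rightarrow> 'a set \<Rightarrow> 'a \<Rightarrow> 'a set" where
  "lobe_of V E M S W \<mu> = (SOME L. agent_lobe V E M S W L \<and> \<mu> \<in> boundary E S L)"

definition fan_of :: "'a set \<Rightarrow> 'a set set \<Rightarrow> 'a set \<Rightarrow> 'a set \<Rightarrow> 'a set \<Rightarrow> 'a \<Rightarrow> 'a list" where
  "fan_of V E M S L = (SOME f. agent_fan V E M S L f)"

text \<open>Paths are chosen per lobe, not per vantage: vantages bounding the same lobe must take their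
  paths from one common fan.\<close>
definition vantage_path :: "'a set \<Rightarrow> 'a set set \<Rightarrow> 'a set \<Rightarrow> 'a set \<Rightarrow> 'a set \<Rightarrow> 'a \<Rightarrow> 'a list" where
  "vantage_path V E M S W \<mu> =
    (if agent V E M S \<mu> then [\<mu>] else fan_of V E M S (lobe_of V E M S W \<mu>) \<mu>)"

lemma lobe_of_spec:
  assumes "biconnected_component V E S" "vantage V E M S W \<mu>" "\<not> agent V E M S \<mu>"
  shows "agent_lobe V E M S W (lobe_of V E M S W \<mu>)" "\<mu> \<in> boundary E S (lobe_of V E M S W \<mu>)"
  using someI_ex[OF vantage_in_boundary_of_agent_lobe[OF assms]] unfolding lobe_of_def by blast+

lemma fan_of_spec: "agent_lobe V E M S W L \<Longrightarrow> agent_fan V E M S L (fan_of V E M S L)"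
  unfolding agent_lobe_def fan_of_def using someI_ex[of "agent_fan V E M S L"] by blast

lemma vantage_path_in_lobe:
  assumes "biconnected_component V E S" "vantage V E M S W \<mu>" "\<not> agent V E M S \<mu>"
  defines "p \<equiv> vantage_path V E M S W \<mu>" and "L \<equiv> lobe_of V E M S W \<mu>"
  shows "simple_path E p" "hd p = \<mu>" "agent V E M S (last p)" "set p \<subseteq> insert \<mu> L"
    "internal p \<subseteq> L"
proof -
  have fan: "simple_path E p" "hd p = \<mu>" "agent V E M S (last p)" "set (tl p) \<subseteq> L"
    using fan_of_spec[OF lobe_of_spec(1)[OF assms(1-3)]] lobe_of_spec(2)[OF assms(1-3)] assms(3)
    unfolding agent_fan_def vantage_path_def p_def L_def by auto
  then show "simple_path E p" "hd p = \<mu>" "agent V E M S (last p)" by simp_all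
  show "set p \<subseteq> insert \<mu> L" using fan simple_path_not_Nil[OF fan(1)] by (cases p) auto
  show "internal p \<subseteq> L" using fan(4) unfolding internal_def by (auto dest: in_set_butlastD)
qed

lemma vantage_path_external:
  assumes "biconnected_component V E S" "vantage V E M S W \<mu>"
  shows "external_path V E M S W \<mu> (vantage_path V E M S W \<mu>)"
proof (cases "agent V E M S \<mu>")
  case True
  then have "\<mu> \<in> V" using assms(1) unfolding agent_def biconnected_component_def by blast
  then show ?thesis using True by (simp add: external_path_def vantage_path_def is_path_iff_simple_path)
next
  case False
  let ?p = "vantage_path V E M S W \<mu>" and ?L = "lobe_of V E M S W \<mu>"
  note p = vantage_path_in_lobe[OF assms False]
  have "?L \<subseteq> S - W" using agent_lobe_subset lobe_of_spec(1)[OF assms False] by blast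
  moreover have "\<mu> \<in> S" using lobe_of_spec(2)[OF assms False] unfolding boundary_def by blast
  moreover have "S \<subseteq> V" using assms(1) unfolding biconnected_component_def by blast
  moreover have "set (tl ?p) \<subseteq> ?L" "\<mu> \<notin> set (tl ?p)"
    using p(1,2,4) simple_path_not_Nil[OF p(1)] simple_path_distinct[OF p(1)] by (cases ?p; auto)+
  ultimately show ?thesis using p unfolding external_path_def is_path_iff_simple_path by auto
qed

lemma vantage_path_internal_disjoint:
  assumes "biconnected_component V E S" "vantage V E M S W \<mu>" "vantage V E M S W \<nu>" "\<mu> \<noteq> \<nu>"
  shows "internal (vantage_path V E M S W \<mu>) \<inter> set (vantage_path V E M S W \<nu>) = {}"
proof (cases "agent V E M S \<mu>")
  case True
  then show ?thesis by (simp add: vantage_path_def internal_def)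
next
  case False
  let ?p = "vantage_path V E M S W \<mu>" and ?q = "vantage_path V E M S W \<nu>"
  let ?L = "lobe_of V E M S W \<mu>" and ?L' = "lobe_of V E M S W \<nu>"
  have p: "internal ?p \<subseteq> ?L" using vantage_path_in_lobe(5)[OF assms(1,2) False] .
  have "?L \<inter> W = {}" using agent_lobe_subset lobe_of_spec(1)[OF assms(1,2) False] by blast
  moreover have "\<nu> \<in> W" using assms(3) unfolding vantage_def by blast
  ultimately have \<nu>: "\<nu> \<notin> internal ?p" using p by blast
  show ?thesis
  proof (cases "agent V E M S \<nu>")
    case True
    then show ?thesis using \<nu> by (simp add: vantage_path_def)
  next
    case \<nu>_not_agent: False
    show ?thesis
    proof (cases "?L = ?L'")
      case True
      have "internally_disjoint (fan_of V E M S ?L \<mu>) (fan_of V E M S ?L \<nu>)"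
        using fan_of_spec[OF lobe_of_spec(1)[OF assms(1,2) False]] lobe_of_spec(2)[OF assms(1,2) False]
          lobe_of_spec(2)[OF assms(1,3) \<nu>_not_agent] True assms(4)
        unfolding agent_fan_def by auto
      then show ?thesis
        using False \<nu>_not_agent True unfolding vantage_path_def internally_disjoint_def by simp
    next
      case False
      then have "?L \<inter> ?L' = {}"
        using agent_lobes_disjoint lobe_of_spec(1)[OF assms(1,2) \<open>\<not> agent V E M S \<mu>\<close>]
          lobe_of_spec(1)[OF assms(1,3) \<nu>_not_agent] by blast
      then show ?thesis
        using p \<nu> vantage_path_in_lobe(4)[OF assms(1,3) \<nu>_not_agent] by blast
    qed
  qed
qed

theorem mainTheorem2:
  fixes V :: "'a set" and E :: "'a set set" and M :: "'a set" and S :: "'a set"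
    and W :: "'a set" and F :: "'a set set"
  assumes "graph V E" and "V \<noteq> {}" and "connected_graph V E" and "M \<subseteq> V"
    and "biconnected_component V E S"
    and "triconnected_component S (induced E S) W F"
  shows "\<exists>P :: 'a \<Rightarrow> 'a list. \<forall>\<mu>. vantage V E M S W \<mu> \<longrightarrow>
           external_path V E M S W \<mu> (P \<mu>) \<and>
           (agent V E M S \<mu> \<longrightarrow> P \<mu> = [\<mu>]) \<and>
           (\<forall>\<nu>. vantage V E M S W \<nu> \<and> \<nu> \<noteq> \<mu> \<longrightarrow> internally_disjoint (P \<mu>) (P \<nu>))"
proof (intro exI[of _ "vantage_path V E M S W"] allI impI conjI)
  fix \<mu> \<nu>
  assume \<mu>: "vantage V E M S W \<mu>"
  show "external_path V E M S W \<mu> (vantage_path V E M S W \<mu>)"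
    using vantage_path_external[OF assms(5) \<mu>] .
  show "agent V E M S \<mu> \<Longrightarrow> vantage_path V E M S W \<mu> = [\<mu>]"
    by (simp add: vantage_path_def)
  assume "vantage V E M S W \<nu> \<and> \<nu> \<noteq> \<mu>"
  then show "internally_disjoint (vantage_path V E M S W \<mu>) (vantage_path V E M S W \<nu>)"
    using vantage_path_internal_disjoint[OF assms(5)] \<mu> unfolding internally_disjoint_def by blast
qed

end
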